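(* Fix $n\in\mathbb{N}$. For integers $0\le s\le t\le n$ let $\mathcal{M}(n,s,t)$ denote the number of monochromatic Schur triples on $\{1,\dots,n\}$ under the coloring $R^sB^{t-s}R^{n-t}$. Then the minimum of $\mathcal{M}(n,s,t)$ over all such integers $s,t$ is attained at \[ s_0=\Bigl\lfloor\frac{4n+2}{11}\Bigr\rfloor,\qquad t_0=\Bigl\lfloor\frac{10n}{11}\Bigr\rfloor . \]
   Context: A Schur triple on $[n]=\{1,\dots,n\}$ is an ordered triple $(x,y,z)\in[n]^3$ with $z=x+y$ (ordered, so $(x,y,x+y)$ and $(y,x,x+y)$ are distinct if $x\ne y$); it is monochromatic under a coloring $\chi$ if $\chi(x)=\chi(y)=\chi(z)$. The coloring $R^sB^{t-s}R^{n-t}$ colors $1,\dots,s$ red, $s+1,\dots,t$ blue, and $t+1,\dots,n$ red. *)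

theory Defs
  imports Main
begin

text \<open>Coloring R^s B^(t-s) R^(n-t): True = red, False = blue.\<close>
definition RBR_col :: "nat \<Rightarrow> nat \<Rightarrow> nat \<Rightarrow> bool" where
  "RBR_col s t x = (x \<le> s \<or> t < x)"

definition mono_schur :: "nat \<Rightarrow> (nat \<Rightarrow> bool) \<Rightarrow> nat" where
  "mono_schur n chi = card {(x, y, z). x \<in> {1..n} \<and> y \<in> {1..n} \<and> z \<in> {1..n} \<and> z = x + y
      \<and> chi x = chi y \<and> chi y = chi z}"

definition M :: "nat \<Rightarrow> nat \<Rightarrow> nat \<Rightarrow> nat" where
  "M n s t = mono_schur n (RBR_col s t)"

end

theory Submission
  imports Defs
begin

text \<open>Counting the monochromatic triples by their largest entry z gives an explicit piecewise
quadratic formula for 2 M(n,s,t). For t \<le> n this formula is, in each of four parameter ranges,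
at least the quadratic Q(n,s',t') = s'(s'-1) + (t'-2s')(t'-2s'-1) + 2(n-t')(n-t'-1) at some
integer point (s',t'), and it equals Q(n,s0,t0). Finally Q(n,s,t) - Q(n,s0,t0) is the positive
definite form 5x^2 + 4xy + 3y^2 in x = s - s0, y = t0 - t plus a linear part; the choice of s0 and t0
makes the linear coefficients so small that the difference is nonnegative on all integers.\<close>

definition falling2 :: "int \<Rightarrow> int" where
  "falling2 k = (if 0 \<le> k then k * (k - 1) else 0)"

lemma falling2_Suc: "falling2 (k + 1) = falling2 k + 2 * max k 0"
  unfolding falling2_def by (cases "k = -1") (auto simp: algebra_simps max_def)

lemma falling2_eq_0: "k \<le> 1 \<Longrightarrow> falling2 k = 0"
  unfolding falling2_def by (cases "k = 1"; cases "k = 0") auto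

lemma falling2_nonneg: "0 \<le> k \<Longrightarrow> falling2 k = k * (k - 1)"
  unfolding falling2_def by simp

definition mono_splits :: "(nat \<Rightarrow> bool) \<Rightarrow> nat \<Rightarrow> nat set" where
  "mono_splits chi z = {x \<in> {1..<z}. chi x = chi (z - x) \<and> chi (z - x) = chi z}"

lemma mono_schur_Suc:
  "mono_schur (Suc n) chi = mono_schur n chi + card (mono_splits chi (Suc n))"
proof -
  define T where "T m = {(x, y, z). x \<in> {1..m} \<and> y \<in> {1..m} \<and> z \<in> {1..m} \<and> z = x + y
      \<and> chi x = chi y \<and> chi y = chi z}" for m
  define new where "new x = (x, Suc n - x, Suc n)" for x
  have T_finite: "finite (T m)" for m
    by (rule finite_subset[of _ "{1..m} \<times> {1..m} \<times> {1..m}"]) (auto simp: T_def)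
  have "T (Suc n) = T n \<union> new ` mono_splits chi (Suc n)"
    by (auto simp: T_def new_def mono_splits_def image_iff le_Suc_eq) (metis add_diff_cancel_left')+
  moreover have "T n \<inter> new ` mono_splits chi (Suc n) = {}"
    by (auto simp: T_def new_def)
  moreover have "inj_on new (mono_splits chi (Suc n))"
    by (auto simp: new_def inj_on_def)
  moreover have "finite (mono_splits chi (Suc n))"
    by (simp add: mono_splits_def)
  ultimately have "card (T (Suc n)) = card (T n) + card (mono_splits chi (Suc n))"
    by (simp add: card_Un_disjoint T_finite card_image)
  moreover have "mono_schur m chi = card (T m)" for m
    by (simp add: mono_schur_def T_def)
  ultimately show ?thesis by simp
qed

definition rbr_splits :: "int \<Rightarrow> int \<Rightarrow> int \<Rightarrow> int" where
  "rbr_splits s t z =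
    (if z \<le> s then z - 1
     else if z \<le> t then max 0 (z - 2 * s - 1)
     else max 0 (2 * s - z + 1) + 2 * min s (z - t - 1) + max 0 (z - 2 * t - 1))"

lemma card_mono_splits_RBR_col:
  assumes "s \<le> t" and "1 \<le> z"
  shows "int (card (mono_splits (RBR_col s t) z)) = rbr_splits (int s) (int t) (int z)"
proof -
  consider "z \<le> s" | "s < z" "z \<le> t" | "t < z" by linarith
  then show ?thesis
  proof cases
    case 1
    then have "mono_splits (RBR_col s t) z = {1..<z}"
      by (auto simp: mono_splits_def RBR_col_def)
    then show ?thesis using 1 assms by (simp add: rbr_splits_def of_nat_diff)
  next
    case 2
    then have "mono_splits (RBR_col s t) z = {s+1..<z-s}"
      by (auto simp: mono_splits_def RBR_col_def)
    then show ?thesis using 2 by (simp add: rbr_splits_def of_nat_diff)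
  next
    case 3
    \<comment> \<open>z is red, so x and z - x are both at most s (A), both above t (D), or one of each (B, C).\<close>
    define A where "A = {z-s..s}"
    define B where "B = {1..<min (s+1) (z-t)}"
    define C where "C = {max (z-s) (t+1)..<z}"
    define D where "D = {t+1..<z-t}"
    have "mono_splits (RBR_col s t) z = (A \<union> B) \<union> (C \<union> D)"
      unfolding mono_splits_def RBR_col_def A_def B_def C_def D_def using 3 assms by auto
    moreover have "A \<inter> B = {}" "C \<inter> D = {}" "(A \<union> B) \<inter> (C \<union> D) = {}"
      unfolding A_def B_def C_def D_def using assms by auto
    ultimately have "card (mono_splits (RBR_col s t) z) = (card A + card B) + (card C + card D)"
      by (simp add: A_def B_def C_def D_def card_Un_disjoint)
    moreover have "int (card A) = max 0 (2 * int s - int z + 1)"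
      "int (card B) = min (int s) (int z - int t - 1)"
      "int (card C) = min (int s) (int z - int t - 1)"
      "int (card D) = max 0 (int z - 2 * int t - 1)"
      unfolding A_def B_def C_def D_def using 3 assms by (auto simp: min_def max_def)
    ultimately show ?thesis using 3 assms by (simp add: rbr_splits_def)
  qed
qed

definition twice_M_main :: "int \<Rightarrow> int \<Rightarrow> int \<Rightarrow> int" where
  "twice_M_main s t n =
     falling2 s - falling2 t + 2 * falling2 (t - s) + falling2 n - 2 * falling2 (n - s)
     + falling2 (n - 2 * s) + 2 * falling2 (n - t) - 2 * falling2 (n - t - s)
     + falling2 (n - 2 * t)"

definition twice_M :: "int \<Rightarrow> int \<Rightarrow> int \<Rightarrow> int" where
  "twice_M s t n =
    (if n \<le> s then falling2 n
     else if n \<le> t then falling2 s + falling2 (n - 2 * s)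
     else twice_M_main s t n)"

lemma twice_M_middle:
  assumes "0 \<le> s" "s \<le> n" "n \<le> t"
  shows "twice_M s t n = falling2 s + falling2 (n - 2 * s)"
  using assms by (cases "n = s") (auto simp: twice_M_def falling2_eq_0)

lemma twice_M_eq_main:
  assumes "0 \<le> s" "s \<le> t" "t \<le> n"
  shows "twice_M s t n = twice_M_main s t n"
proof (cases "n = t")
  case True
  then show ?thesis
    using assms by (cases "n = s") (auto simp: twice_M_def twice_M_main_def falling2_eq_0)
qed (use assms in \<open>simp add: twice_M_def\<close>)

lemma twice_M_Suc:
  assumes "0 \<le> s" "s \<le> t" "0 \<le> n"
  shows "twice_M s t (n + 1) = twice_M s t n + 2 * rbr_splits s t (n + 1)"
proof -
  have step: "falling2 (n + 1 - k) = falling2 (n - k) + 2 * max (n - k) 0" for k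
    using falling2_Suc[of "n - k"] by (simp add: algebra_simps)
  consider "n + 1 \<le> s" | "s < n + 1" "n + 1 \<le> t" | "t < n + 1" by linarith
  then show ?thesis
  proof cases
    case 1
    then show ?thesis using assms by (simp add: twice_M_def falling2_Suc rbr_splits_def)
  next
    case 2
    then show ?thesis
      using assms step[of "2 * s"] by (simp add: twice_M_middle rbr_splits_def max_def)
  next
    case 3
    then show ?thesis
      using assms step[of 0] step[of s] step[of "2 * s"] step[of t] step[of "t + s"] step[of "2 * t"]
      by (simp add: twice_M_eq_main twice_M_main_def rbr_splits_def max_def min_def
          algebra_simps)
  qed
qed

lemma M_closed_form:
  assumes "s \<le> t"
  shows "2 * int (M n s t) = twice_M (int s) (int t) (int n)"
proof (induction n)
  case 0
  show ?case by (simp add: M_def mono_schur_def twice_M_def falling2_def case_prod_unfold)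
next
  case (Suc n)
  have "2 * int (M (Suc n) s t) = 2 * int (M n s t) + 2 * rbr_splits (int s) (int t) (int n + 1)"
    using card_mono_splits_RBR_col[OF assms, of "Suc n"] by (simp add: M_def mono_schur_Suc add.commute)
  also have "\<dots> = twice_M (int s) (int t) (int n + 1)"
    using Suc.IH twice_M_Suc[of "int s" "int t" "int n"] assms by simp
  finally show ?case by (simp add: add.commute)
qed

definition twice_M_quad :: "int \<Rightarrow> int \<Rightarrow> int \<Rightarrow> int" where
  "twice_M_quad n s t = s * (s - 1) + (t - 2 * s) * (t - 2 * s - 1) + 2 * (n - t) * (n - t - 1)"

lemma twice_M_main_eq_quad:
  assumes "0 \<le> s" "s \<le> t" "t \<le> n" "n - t - s \<le> 1" "n - 2 * t \<le> 1" "2 * s \<le> n"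
  shows "twice_M_main s t n = twice_M_quad n s t"
proof -
  have "falling2 (n - t - s) = 0" "falling2 (n - 2 * t) = 0"
    using assms by (simp_all add: falling2_eq_0)
  then show ?thesis
    using assms by (simp add: twice_M_main_def twice_M_quad_def falling2_nonneg algebra_simps)
qed

lemma twice_M_main_ge_quad:
  assumes "0 \<le> s" "s \<le> t" "t \<le> n"
  shows "\<exists>s' t'. twice_M_quad n s' t' \<le> twice_M_main s t n"
proof -
  consider "n \<le> 2 * s" | "2 * s \<le> n" "n - t - s \<le> 0" | "0 \<le> n - t - s" "n \<le> 2 * t"
    | "2 * t \<le> n" by linarith
  then show ?thesis
  proof cases
    case 1
    have "falling2 (n - 2 * s) = 0" "falling2 (n - t - s) = 0" "falling2 (n - 2 * t) = 0"
      using assms 1 by (simp_all add: falling2_eq_0)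
    then have "twice_M_main s t n = twice_M_quad n (t - s) t
        + ((n - t) * (n + t - 2 * s) + 2 * (n - s) * (2 * s - n) + (n - t))"
      using assms by (simp add: twice_M_main_def twice_M_quad_def falling2_nonneg algebra_simps)
    moreover have "0 \<le> (n - t) * (n + t - 2 * s)" "0 \<le> (n - s) * (2 * s - n)"
      using assms 1 by simp_all
    ultimately have "twice_M_quad n (t - s) t \<le> twice_M_main s t n" using assms by linarith
    then show ?thesis by blast
  next
    case 2
    then have "twice_M_main s t n = twice_M_quad n s t"
      using assms by (intro twice_M_main_eq_quad) auto
    then show ?thesis by (metis order_refl)
  next
    case 3
    have "falling2 (n - 2 * t) = 0" using assms 3 by (simp add: falling2_eq_0)
    then have "twice_M_main s t n = twice_M_quad n (n - t) (n - s) + 2 * ((n - t - s) * (2 * t - n))"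
      using assms 3 by (simp add: twice_M_main_def twice_M_quad_def falling2_nonneg algebra_simps)
    moreover have "0 \<le> (n - t - s) * (2 * t - n)" using 3 by simp
    ultimately have "twice_M_quad n (n - t) (n - s) \<le> twice_M_main s t n" by linarith
    then show ?thesis by blast
  next
    case 4
    have "twice_M_main s t n = twice_M_quad n (t - s) n + 2 * (s * (t - s))"
      using assms 4 by (simp add: twice_M_main_def twice_M_quad_def falling2_nonneg algebra_simps)
    moreover have "0 \<le> s * (t - s)" using assms by simp
    ultimately have "twice_M_quad n (t - s) n \<le> twice_M_main s t n" by linarith
    then show ?thesis by blast
  qed
qed

lemma linear_le_quadratic:
  fixes w p c :: int
  assumes "\<bar>p\<bar> \<le> c"
  shows "0 \<le> c * (w * w) + p * w"
proof -
  have "\<bar>w\<bar> \<le> w * w"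
  proof (cases "w = 0")
    case False
    then have "\<bar>w\<bar> * 1 \<le> \<bar>w\<bar> * \<bar>w\<bar>" by (intro mult_left_mono) auto
    then show ?thesis by (simp add: abs_mult_self_eq)
  qed simp
  then have "\<bar>p * w\<bar> \<le> c * (w * w)"
    using assms unfolding abs_mult by (meson abs_ge_zero mult_mono order_trans)
  then show ?thesis by linarith
qed

lemma quad_form_nonneg:
  fixes x y a b :: int
  assumes "\<bar>a\<bar> \<le> 5" "\<bar>b\<bar> \<le> 3" "\<bar>a - b\<bar> \<le> 4"
  shows "0 \<le> 5 * x^2 + 4 * x * y + 3 * y^2 + a * x + b * y"
proof -
  \<comment> \<open>Split a = P + K, b = K + R with |P| \<le> 3, |K| \<le> 2, |R| \<le> 1 and write the form as
     (3x^2 + Px) + (2(x+y)^2 + K(x+y)) + (y^2 + Ry).\<close>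
  define K where "K = max (-2) (max (a - 3) (b - 1))"
  have "\<bar>K\<bar> \<le> 2" "\<bar>a - K\<bar> \<le> 3" "\<bar>b - K\<bar> \<le> 1"
    using assms unfolding K_def by linarith+
  then have "0 \<le> 3 * (x * x) + (a - K) * x" "0 \<le> 2 * ((x + y) * (x + y)) + K * (x + y)"
    "0 \<le> 1 * (y * y) + (b - K) * y"
    by (simp_all only: linear_le_quadratic)
  moreover have "5 * x^2 + 4 * x * y + 3 * y^2 + a * x + b * y
      = (3 * (x * x) + (a - K) * x) + (2 * ((x + y) * (x + y)) + K * (x + y))
        + (1 * (y * y) + (b - K) * y)"
    by (simp add: algebra_simps power2_eq_square)
  ultimately show ?thesis by linarith
qed

lemma twice_M_quad_diff:
  "twice_M_quad n s t - twice_M_quad n s0 t0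
     = 5 * (s - s0)^2 + 4 * (s - s0) * (t0 - t) + 3 * (t0 - t)^2
       + (10 * s0 - 4 * t0 + 1) * (s - s0) + (4 * n + 4 * s0 - 6 * t0 - 1) * (t0 - t)"
  unfolding twice_M_quad_def by (simp add: algebra_simps power2_eq_square)

lemma optimal_split_bounds:
  fixes n :: nat
  defines "s0 \<equiv> (4 * n + 2) div 11" and "t0 \<equiv> (10 * n) div 11"
  shows "s0 \<le> t0 \<and> t0 \<le> n \<and> n \<le> t0 + s0 + 1 \<and> n \<le> 2 * t0 + 1 \<and> 2 * s0 \<le> n
    \<and> \<bar>10 * int s0 - 4 * int t0 + 1\<bar> \<le> 5
    \<and> \<bar>4 * int n + 4 * int s0 - 6 * int t0 - 1\<bar> \<le> 3
    \<and> \<bar>6 * int s0 + 2 * int t0 - 4 * int n + 2\<bar> \<le> 4"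
proof -
  define q r where "q = n div 11" and "r = n mod 11"
  define a c where "a = (4 * r + 2) div 11" and "c = (10 * r) div 11"
  have n: "n = 11 * q + r" and "r < 11" unfolding q_def r_def by simp_all
  have "s0 = 4 * q + a" "t0 = 10 * q + c"
    unfolding s0_def t0_def a_def c_def n by simp_all
  moreover have "r \<in> {0..<11}" using \<open>r < 11\<close> by simp
  then have "a \<le> c \<and> c \<le> r \<and> r \<le> a + c + 1 \<and> r \<le> 2 * c + 1 \<and> 2 * a \<le> r
    \<and> \<bar>10 * int a - 4 * int c + 1\<bar> \<le> 5 \<and> \<bar>4 * int r + 4 * int a - 6 * int c - 1\<bar> \<le> 3
    \<and> \<bar>6 * int a + 2 * int c - 4 * int r + 2\<bar> \<le> 4"
    unfolding a_def c_def by (simp add: atLeastLessThan_upt upt_conv_Cons) auto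
  ultimately show ?thesis unfolding n by auto
qed

lemma twice_M_quad_min:
  fixes n :: nat and s t :: int
  defines "s0 \<equiv> (4 * n + 2) div 11" and "t0 \<equiv> (10 * n) div 11"
  shows "twice_M_quad (int n) (int s0) (int t0) \<le> twice_M_quad (int n) s t"
  using twice_M_quad_diff[of "int n" s t "int s0" "int t0"]
    quad_form_nonneg[of "10 * int s0 - 4 * int t0 + 1" "4 * int n + 4 * int s0 - 6 * int t0 - 1"
      "s - int s0" "int t0 - t"]
    optimal_split_bounds[of n]
  unfolding s0_def t0_def by (simp add: algebra_simps)

theorem lemma2p2:
  fixes n :: nat
  defines "s0 \<equiv> (4 * n + 2) div 11" and "t0 \<equiv> (10 * n) div 11"
  shows "s0 \<le> t0 \<and> t0 \<le> n \<and>
         (\<forall>s t. s \<le> t \<and> t \<le> n \<longrightarrow> M n s0 t0 \<le> M n s t)"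
proof -
  have opt: "s0 \<le> t0" "t0 \<le> n" "n \<le> t0 + s0 + 1" "n \<le> 2 * t0 + 1" "2 * s0 \<le> n"
    using optimal_split_bounds[of n] unfolding s0_def t0_def by auto
  have M_opt: "2 * int (M n s0 t0) = twice_M_quad (int n) (int s0) (int t0)"
    using opt by (simp add: M_closed_form twice_M_eq_main twice_M_main_eq_quad)
  have "M n s0 t0 \<le> M n s t" if "s \<le> t" "t \<le> n" for s t
  proof -
    have "\<exists>s' t'. twice_M_quad (int n) s' t' \<le> twice_M_main (int s) (int t) (int n)"
      using that by (intro twice_M_main_ge_quad) auto
    then obtain s' t' where "twice_M_quad (int n) s' t' \<le> twice_M_main (int s) (int t) (int n)"
      by blast
    moreover have "2 * int (M n s t) = twice_M_main (int s) (int t) (int n)"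
      using that by (simp add: M_closed_form twice_M_eq_main)
    moreover have "twice_M_quad (int n) (int s0) (int t0) \<le> twice_M_quad (int n) s' t'"
      unfolding s0_def t0_def by (rule twice_M_quad_min)
    ultimately show ?thesis using M_opt by linarith
  qed
  then show ?thesis using opt by blast
qed

end
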